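(* Let $L$ be a C-loop with nucleus $N$. Then the factor loop $L/N$ is a Steiner loop.
   Context: A C-loop is a loop satisfying $x(y(yz))=((xy)y)z$ for all $x,y,z$. The nucleus $N$ of a loop is the set of elements $a$ with $a(yz)=(ay)z$, $y(az)=(ya)z$, $y(za)=(yz)a$ for all $y,z$; in a C-loop it is a normal subloop (normal meaning $xN=Nx$, $x(yN)=(xy)N$, $x(Ny)=(xN)y$ for all $x,y$), and $L/N$ is the factor loop of cosets. A Steiner loop is a loop with neutral element $e$ satisfying $xx=e$, $(yx)x=y$, $xy=yx$ for all $x,y$. *)

theory Defs
  imports Main
begin

definition loop :: "'a set \<Rightarrow> ('a \<Rightarrow> 'a \<Rightarrow> 'a) \<Rightarrow> 'a \<Rightarrow> bool" where
  "loop L m e \<longleftrightarrow> e \<in> L \<and> (\<forall>x\<in>L. \<forall>y\<in>L. m x y \<in> L)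
     \<and> (\<forall>x\<in>L. m e x = x \<and> m x e = x)
     \<and> (\<forall>a\<in>L. \<forall>b\<in>L. \<exists>!x. x \<in> L \<and> m a x = b)
     \<and> (\<forall>a\<in>L. \<forall>b\<in>L. \<exists>!y. y \<in> L \<and> m y a = b)"

definition C_loop :: "'a set \<Rightarrow> ('a \<Rightarrow> 'a \<Rightarrow> 'a) \<Rightarrow> 'a \<Rightarrow> bool" where
  "C_loop L m e \<longleftrightarrow> loop L m e \<and>
     (\<forall>x\<in>L. \<forall>y\<in>L. \<forall>z\<in>L. m x (m y (m y z)) = m (m (m x y) y) z)"

definition nucleus :: "'a set \<Rightarrow> ('a \<Rightarrow> 'a \<Rightarrow> 'a) \<Rightarrow> 'a set" where
  "nucleus L m = {a \<in> L. \<forall>y\<in>L. \<forall>z\<in>L.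
      m a (m y z) = m (m a y) z \<and> m y (m a z) = m (m y a) z \<and> m y (m z a) = m (m y z) a}"

definition lcoset :: "('a \<Rightarrow> 'a \<Rightarrow> 'a) \<Rightarrow> 'a \<Rightarrow> 'a set \<Rightarrow> 'a set" where
  "lcoset m x N = (\<lambda>n. m x n) ` N"

definition factor_carrier :: "'a set \<Rightarrow> ('a \<Rightarrow> 'a \<Rightarrow> 'a) \<Rightarrow> 'a set \<Rightarrow> 'a set set" where
  "factor_carrier L m N = (\<lambda>x. lcoset m x N) ` L"

definition factor_mult :: "('a \<Rightarrow> 'a \<Rightarrow> 'a) \<Rightarrow> 'a set \<Rightarrow> 'a set \<Rightarrow> 'a set \<Rightarrow> 'a set" where
  "factor_mult m N A B = lcoset m (m (SOME a. a \<in> A) (SOME b. b \<in> B)) N"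

definition steiner_loop :: "'a set \<Rightarrow> ('a \<Rightarrow> 'a \<Rightarrow> 'a) \<Rightarrow> 'a \<Rightarrow> bool" where
  "steiner_loop L m e \<longleftrightarrow> loop L m e \<and>
     (\<forall>x\<in>L. \<forall>y\<in>L. m x x = e \<and> m (m y x) x = y \<and> m x y = m y x)"

end

theory Submission
  imports Defs
begin

text \<open>Putting \<open>x = e\<close> or \<open>z = e\<close> in the C-law shows that a C-loop is alternative, and
  then that it has the inverse property. Rewritten with alternativity, the C-law says that
  every square \<open>y y\<close> lies in the middle nucleus. In an inverse property loop inversion
  is an anti-automorphism that permutes the left, middle and right nucleus, so the middle
  nucleus is the whole nucleus \<open>N\<close>: all squares are nuclear. Hence \<open>N\<close> is normal,
  every element of \<open>L/N\<close> squares to the identity, and \<open>x\<^sup>-\<^sup>1 N = x N\<close>; applying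
  inversion to \<open>x y\<close> then shows that \<open>L/N\<close> is commutative.\<close>

locale loop_ctx =
  fixes L :: "'a set" and m :: "'a \<Rightarrow> 'a \<Rightarrow> 'a" (infixl "\<cdot>" 70) and e :: 'a
  assumes loop: "loop L m e"
begin

lemma one_closed [simp]: "e \<in> L"
  and mult_closed [simp]: "x \<in> L \<Longrightarrow> y \<in> L \<Longrightarrow> x \<cdot> y \<in> L"
  and left_unit [simp]: "x \<in> L \<Longrightarrow> e \<cdot> x = x"
  and right_unit [simp]: "x \<in> L \<Longrightarrow> x \<cdot> e = x"
  and left_div_unique: "a \<in> L \<Longrightarrow> b \<in> L \<Longrightarrow> \<exists>!x. x \<in> L \<and> a \<cdot> x = b"
  and right_div_unique: "a \<in> L \<Longrightarrow> b \<in> L \<Longrightarrow> \<exists>!x. x \<in> L \<and> x \<cdot> a = b"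
  using loop unfolding loop_def by auto

lemma left_cancel: "a \<in> L \<Longrightarrow> x \<in> L \<Longrightarrow> y \<in> L \<Longrightarrow> a \<cdot> x = a \<cdot> y \<Longrightarrow> x = y"
  using left_div_unique[of a "a \<cdot> x"] by auto

lemma right_div: "a \<in> L \<Longrightarrow> b \<in> L \<Longrightarrow> \<exists>x\<in>L. x \<cdot> a = b"
  using right_div_unique by blast

lemma left_div: "a \<in> L \<Longrightarrow> b \<in> L \<Longrightarrow> \<exists>x\<in>L. a \<cdot> x = b"
  using left_div_unique by blast

definition left_nuclear :: "'a \<Rightarrow> bool" where
  "left_nuclear a \<longleftrightarrow> (\<forall>y\<in>L. \<forall>z\<in>L. a \<cdot> (y \<cdot> z) = (a \<cdot> y) \<cdot> z)"

definition middle_nuclear :: "'a \<Rightarrow> bool" where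
  "middle_nuclear a \<longleftrightarrow> (\<forall>y\<in>L. \<forall>z\<in>L. y \<cdot> (a \<cdot> z) = (y \<cdot> a) \<cdot> z)"

definition right_nuclear :: "'a \<Rightarrow> bool" where
  "right_nuclear a \<longleftrightarrow> (\<forall>y\<in>L. \<forall>z\<in>L. y \<cdot> (z \<cdot> a) = (y \<cdot> z) \<cdot> a)"

lemma nucleus_iff:
  "a \<in> nucleus L m \<longleftrightarrow> a \<in> L \<and> left_nuclear a \<and> middle_nuclear a \<and> right_nuclear a"
  unfolding nucleus_def left_nuclear_def middle_nuclear_def right_nuclear_def by auto

abbreviation N :: "'a set" where "N \<equiv> nucleus L m"

lemma nucleus_subset: "a \<in> N \<Longrightarrow> a \<in> L"
  by (simp add: nucleus_iff)

lemma nucleus_assoc_left: "a \<in> N \<Longrightarrow> y \<in> L \<Longrightarrow> z \<in> L \<Longrightarrow> a \<cdot> (y \<cdot> z) = (a \<cdot> y) \<cdot> z"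
  and nucleus_assoc_middle: "a \<in> N \<Longrightarrow> y \<in> L \<Longrightarrow> z \<in> L \<Longrightarrow> y \<cdot> (a \<cdot> z) = (y \<cdot> a) \<cdot> z"
  and nucleus_assoc_right: "a \<in> N \<Longrightarrow> y \<in> L \<Longrightarrow> z \<in> L \<Longrightarrow> y \<cdot> (z \<cdot> a) = (y \<cdot> z) \<cdot> a"
  by (simp_all add: nucleus_iff left_nuclear_def middle_nuclear_def right_nuclear_def)

lemma one_in_nucleus: "e \<in> N"
  by (simp add: nucleus_iff left_nuclear_def middle_nuclear_def right_nuclear_def)

lemma nucleus_mult_closed:
  assumes a: "a \<in> N" and b: "b \<in> N"
  shows "a \<cdot> b \<in> N"
proof -
  have aL: "a \<in> L" and bL: "b \<in> L" using a b nucleus_subset by auto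
  have "left_nuclear (a \<cdot> b)" unfolding left_nuclear_def
  proof (intro ballI)
    fix y z assume y: "y \<in> L" and z: "z \<in> L"
    have "(a \<cdot> b) \<cdot> (y \<cdot> z) = a \<cdot> (b \<cdot> (y \<cdot> z))" using nucleus_assoc_left[OF a] y z bL by simp
    also have "\<dots> = a \<cdot> ((b \<cdot> y) \<cdot> z)" using nucleus_assoc_left[OF b] y z by simp
    also have "\<dots> = (a \<cdot> (b \<cdot> y)) \<cdot> z" using nucleus_assoc_left[OF a] y z bL by simp
    also have "\<dots> = ((a \<cdot> b) \<cdot> y) \<cdot> z" using nucleus_assoc_left[OF a] y bL by simp
    finally show "(a \<cdot> b) \<cdot> (y \<cdot> z) = ((a \<cdot> b) \<cdot> y) \<cdot> z" .
  qed
  moreover have "middle_nuclear (a \<cdot> b)" unfolding middle_nuclear_def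
  proof (intro ballI)
    fix y z assume y: "y \<in> L" and z: "z \<in> L"
    have "y \<cdot> ((a \<cdot> b) \<cdot> z) = y \<cdot> (a \<cdot> (b \<cdot> z))" using nucleus_assoc_left[OF a] z bL by simp
    also have "\<dots> = (y \<cdot> a) \<cdot> (b \<cdot> z)" using nucleus_assoc_middle[OF a] y z bL by simp
    also have "\<dots> = ((y \<cdot> a) \<cdot> b) \<cdot> z" using nucleus_assoc_middle[OF b] y z aL by simp
    also have "\<dots> = (y \<cdot> (a \<cdot> b)) \<cdot> z" using nucleus_assoc_right[OF b] y aL by simp
    finally show "y \<cdot> ((a \<cdot> b) \<cdot> z) = (y \<cdot> (a \<cdot> b)) \<cdot> z" .
  qed
  moreover have "right_nuclear (a \<cdot> b)" unfolding right_nuclear_def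
  proof (intro ballI)
    fix y z assume y: "y \<in> L" and z: "z \<in> L"
    have "y \<cdot> (z \<cdot> (a \<cdot> b)) = y \<cdot> ((z \<cdot> a) \<cdot> b)" using nucleus_assoc_right[OF b] z aL by simp
    also have "\<dots> = (y \<cdot> (z \<cdot> a)) \<cdot> b" using nucleus_assoc_right[OF b] y z aL by simp
    also have "\<dots> = ((y \<cdot> z) \<cdot> a) \<cdot> b" using nucleus_assoc_right[OF a] y z by simp
    also have "\<dots> = (y \<cdot> z) \<cdot> (a \<cdot> b)" using nucleus_assoc_right[OF b] y z aL by simp
    finally show "y \<cdot> (z \<cdot> (a \<cdot> b)) = (y \<cdot> z) \<cdot> (a \<cdot> b)" .
  qed
  ultimately show ?thesis using aL bL by (simp add: nucleus_iff)
qed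

end

locale C_loop_ctx = loop_ctx +
  assumes C_law: "x \<in> L \<Longrightarrow> y \<in> L \<Longrightarrow> z \<in> L \<Longrightarrow> x \<cdot> (y \<cdot> (y \<cdot> z)) = ((x \<cdot> y) \<cdot> y) \<cdot> z"

lemma C_loop_ctxI: "C_loop L m e \<Longrightarrow> C_loop_ctx L m e"
  unfolding C_loop_def C_loop_ctx_def C_loop_ctx_axioms_def loop_ctx_def by blast

context C_loop_ctx
begin

lemma left_alternative: "y \<in> L \<Longrightarrow> z \<in> L \<Longrightarrow> y \<cdot> (y \<cdot> z) = (y \<cdot> y) \<cdot> z"
  using C_law[of e y z] by simp

lemma right_alternative: "x \<in> L \<Longrightarrow> y \<in> L \<Longrightarrow> (x \<cdot> y) \<cdot> y = x \<cdot> (y \<cdot> y)"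
  using C_law[of x y e] by simp

definition loop_inv :: "'a \<Rightarrow> 'a" where
  "loop_inv x = (THE y. y \<in> L \<and> x \<cdot> y = e)"

lemma loop_inv_closed [simp]: "x \<in> L \<Longrightarrow> loop_inv x \<in> L"
  and right_inverse [simp]: "x \<in> L \<Longrightarrow> x \<cdot> loop_inv x = e"
  unfolding loop_inv_def using theI'[OF left_div_unique[of x e]] by simp_all

lemma right_inverse_property [simp]: "y \<in> L \<Longrightarrow> w \<in> L \<Longrightarrow> (w \<cdot> y) \<cdot> loop_inv y = w"
proof -
  assume y: "y \<in> L" and w: "w \<in> L"
  obtain x where x: "x \<in> L" "x \<cdot> y = w" using right_div[OF y w] by blast
  have "x \<cdot> (y \<cdot> (y \<cdot> loop_inv y)) = ((x \<cdot> y) \<cdot> y) \<cdot> loop_inv y" using C_law[of x y "loop_inv y"] x y by simp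
  then show ?thesis using x y by simp
qed

lemma left_inverse [simp]: "y \<in> L \<Longrightarrow> loop_inv y \<cdot> y = e"
proof -
  assume y: "y \<in> L"
  obtain l where l: "l \<in> L" "l \<cdot> y = e" using right_div[OF y one_closed] by blast
  have l_cancels: "l \<cdot> (y \<cdot> u) = u" if u: "u \<in> L" for u
  proof -
    obtain z where z: "z \<in> L" "y \<cdot> z = u" using left_div[OF y u] by blast
    have "l \<cdot> (y \<cdot> (y \<cdot> z)) = ((l \<cdot> y) \<cdot> y) \<cdot> z" using C_law[of l y z] l y z by simp
    then show ?thesis using l y z(1) by (simp add: z(2)[symmetric])
  qed
  have "l = loop_inv y" using l_cancels[of "loop_inv y"] l y by simp
  then show ?thesis using l by simp
qed

lemma left_inverse_property [simp]: "y \<in> L \<Longrightarrow> u \<in> L \<Longrightarrow> loop_inv y \<cdot> (y \<cdot> u) = u"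
proof -
  assume y: "y \<in> L" and u: "u \<in> L"
  obtain z where z: "z \<in> L" "y \<cdot> z = u" using left_div[OF y u] by blast
  have "loop_inv y \<cdot> (y \<cdot> (y \<cdot> z)) = ((loop_inv y \<cdot> y) \<cdot> y) \<cdot> z" using C_law[of "loop_inv y" y z] y z by simp
  then show ?thesis using y z(1) by (simp add: z(2)[symmetric])
qed

lemma loop_inv_loop_inv [simp]: "y \<in> L \<Longrightarrow> loop_inv (loop_inv y) = y"
  using left_cancel[of "loop_inv y" "loop_inv (loop_inv y)" y] by simp

lemma left_inverse_property' [simp]: "y \<in> L \<Longrightarrow> u \<in> L \<Longrightarrow> y \<cdot> (loop_inv y \<cdot> u) = u"
  using left_inverse_property[of "loop_inv y" u] by simp

lemma right_inverse_property' [simp]: "y \<in> L \<Longrightarrow> w \<in> L \<Longrightarrow> (w \<cdot> loop_inv y) \<cdot> y = w"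
  using right_inverse_property[of "loop_inv y" w] by simp

lemma loop_inv_mult:
  assumes a: "a \<in> L" and b: "b \<in> L"
  shows "loop_inv (a \<cdot> b) = loop_inv b \<cdot> loop_inv a"
proof -
  have "b \<cdot> loop_inv (a \<cdot> b) = loop_inv a"
    using right_inverse_property[of "a \<cdot> b" "loop_inv a"] a b by simp
  then show ?thesis using left_inverse_property[of b "loop_inv (a \<cdot> b)"] a b by simp
qed

lemma middle_nuclear_square: "y \<in> L \<Longrightarrow> middle_nuclear (y \<cdot> y)"
  unfolding middle_nuclear_def
proof (intro ballI)
  fix x z assume y: "y \<in> L" and x: "x \<in> L" and z: "z \<in> L"
  have "x \<cdot> ((y \<cdot> y) \<cdot> z) = x \<cdot> (y \<cdot> (y \<cdot> z))" using left_alternative y z by simp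
  also have "\<dots> = ((x \<cdot> y) \<cdot> y) \<cdot> z" using C_law x y z by simp
  also have "\<dots> = (x \<cdot> (y \<cdot> y)) \<cdot> z" using right_alternative x y by simp
  finally show "x \<cdot> ((y \<cdot> y) \<cdot> z) = (x \<cdot> (y \<cdot> y)) \<cdot> z" .
qed

lemma middle_nuclear_loop_inv:
  assumes t: "t \<in> L" and mid: "middle_nuclear t"
  shows "middle_nuclear (loop_inv t)"
  unfolding middle_nuclear_def
proof (intro ballI)
  fix x z assume x: "x \<in> L" and z: "z \<in> L"
  have "loop_inv z \<cdot> (t \<cdot> loop_inv x) = (loop_inv z \<cdot> t) \<cdot> loop_inv x"
    using mid x z unfolding middle_nuclear_def by simp
  then have "loop_inv (loop_inv z \<cdot> (t \<cdot> loop_inv x)) = loop_inv ((loop_inv z \<cdot> t) \<cdot> loop_inv x)"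
    by simp
  then show "x \<cdot> (loop_inv t \<cdot> z) = (x \<cdot> loop_inv t) \<cdot> z"
    using t x z by (simp add: loop_inv_mult)
qed

lemma right_nuclear_loop_inv:
  assumes t: "t \<in> L" and mid: "middle_nuclear t"
  shows "right_nuclear (loop_inv t)"
  unfolding right_nuclear_def
proof (intro ballI)
  fix v u assume v: "v \<in> L" and u: "u \<in> L"
  have cancel: "((v \<cdot> u) \<cdot> loop_inv t) \<cdot> (t \<cdot> loop_inv u) = v"
    using mid[unfolded middle_nuclear_def, rule_format, of "(v \<cdot> u) \<cdot> loop_inv t" "loop_inv u"] t u v
    by simp
  have "(v \<cdot> u) \<cdot> loop_inv t
      = (((v \<cdot> u) \<cdot> loop_inv t) \<cdot> (t \<cdot> loop_inv u)) \<cdot> loop_inv (t \<cdot> loop_inv u)"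
    using t u v by simp
  also have "\<dots> = v \<cdot> (u \<cdot> loop_inv t)" using cancel loop_inv_mult t u by simp
  finally show "v \<cdot> (u \<cdot> loop_inv t) = (v \<cdot> u) \<cdot> loop_inv t" by simp
qed

lemma left_nuclear_loop_inv:
  assumes t: "t \<in> L" and right: "right_nuclear t"
  shows "left_nuclear (loop_inv t)"
  unfolding left_nuclear_def
proof (intro ballI)
  fix y z assume y: "y \<in> L" and z: "z \<in> L"
  have "loop_inv z \<cdot> (loop_inv y \<cdot> t) = (loop_inv z \<cdot> loop_inv y) \<cdot> t"
    using right y z unfolding right_nuclear_def by simp
  then have "loop_inv (loop_inv z \<cdot> (loop_inv y \<cdot> t)) = loop_inv ((loop_inv z \<cdot> loop_inv y) \<cdot> t)"
    by simp
  then show "loop_inv t \<cdot> (y \<cdot> z) = (loop_inv t \<cdot> y) \<cdot> z"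
    using t y z by (simp add: loop_inv_mult)
qed

lemma nucleus_iff_middle_nuclear: "a \<in> N \<longleftrightarrow> a \<in> L \<and> middle_nuclear a"
proof (intro iffI)
  assume a: "a \<in> L \<and> middle_nuclear a"
  then have "middle_nuclear (loop_inv a)" by (simp add: middle_nuclear_loop_inv)
  then have "right_nuclear a" using right_nuclear_loop_inv[of "loop_inv a"] a by simp
  moreover have "left_nuclear a"
    using left_nuclear_loop_inv[OF _ right_nuclear_loop_inv[of a]] a by simp
  ultimately show "a \<in> N" using a by (simp add: nucleus_iff)
qed (simp add: nucleus_iff)

lemma square_in_nucleus: "y \<in> L \<Longrightarrow> y \<cdot> y \<in> N"
  by (simp add: nucleus_iff_middle_nuclear middle_nuclear_square)

lemma loop_inv_in_nucleus: "a \<in> N \<Longrightarrow> loop_inv a \<in> N"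
  by (simp add: nucleus_iff_middle_nuclear middle_nuclear_loop_inv)

lemma conjugate_in_nucleus:
  assumes x: "x \<in> L" and n: "n \<in> N"
  shows "loop_inv x \<cdot> (n \<cdot> x) \<in> N"
proof -
  have nL: "n \<in> L" using n nucleus_subset by blast
  \<comment> \<open>\<open>x (n x)\<close> is nuclear because \<open>(x (n x)) n\<close> is the square \<open>(x n) (x n)\<close>, and
    \<open>x\<^sup>-\<^sup>1 = x\<^sup>-\<^sup>2 x\<close> with \<open>x\<^sup>-\<^sup>2\<close> nuclear.\<close>
  have "(x \<cdot> n) \<cdot> (x \<cdot> n) = x \<cdot> (n \<cdot> (x \<cdot> n))" using nucleus_assoc_middle[OF n] x nL by simp
  also have "\<dots> = (x \<cdot> (n \<cdot> x)) \<cdot> n" using nucleus_assoc_right[OF n] x nL by simp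
  finally have "(x \<cdot> (n \<cdot> x)) \<cdot> n \<in> N" using square_in_nucleus[of "x \<cdot> n"] x nL by simp
  then have xnx: "x \<cdot> (n \<cdot> x) \<in> N"
    using nucleus_mult_closed[OF _ loop_inv_in_nucleus[OF n]] x nL by fastforce
  let ?q = "loop_inv x \<cdot> loop_inv x"
  have q: "?q \<in> N" using square_in_nucleus x by simp
  have "loop_inv x \<cdot> (n \<cdot> x) = (?q \<cdot> x) \<cdot> (n \<cdot> x)" using x by simp
  also have "\<dots> = ?q \<cdot> (x \<cdot> (n \<cdot> x))" using nucleus_assoc_left[OF q] x nL by simp
  finally show ?thesis using nucleus_mult_closed[OF q xnx] by simp
qed

abbreviation coset :: "'a \<Rightarrow> 'a set" where "coset x \<equiv> lcoset m x N"

lemma mem_coset_iff: "y \<in> coset x \<longleftrightarrow> (\<exists>n\<in>N. y = x \<cdot> n)"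
  by (auto simp: lcoset_def)

lemma mem_coset_self: "a \<in> L \<Longrightarrow> a \<in> coset a"
  using one_in_nucleus by (metis mem_coset_iff right_unit)

lemma coset_mult_nucleus:
  assumes a: "a \<in> L" and n: "n \<in> N"
  shows "coset (a \<cdot> n) = coset a"
proof (intro equalityI subsetI)
  fix x
  assume "x \<in> coset (a \<cdot> n)"
  then obtain k where k: "k \<in> N" "x = (a \<cdot> n) \<cdot> k" by (auto simp: mem_coset_iff)
  then have "x = a \<cdot> (n \<cdot> k)" using nucleus_assoc_middle[OF n] a nucleus_subset by simp
  then show "x \<in> coset a" using nucleus_mult_closed[OF n k(1)] by (auto simp: mem_coset_iff)
next
  fix x
  assume "x \<in> coset a"
  then obtain k where k: "k \<in> N" "x = a \<cdot> k" by (auto simp: mem_coset_iff)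
  have nL: "n \<in> L" and kL: "k \<in> L" using n k nucleus_subset by auto
  have "(a \<cdot> n) \<cdot> (loop_inv n \<cdot> k) = a \<cdot> (n \<cdot> (loop_inv n \<cdot> k))"
    using nucleus_assoc_middle[OF n, of a "loop_inv n \<cdot> k"] a nL kL by simp
  then have "x = (a \<cdot> n) \<cdot> (loop_inv n \<cdot> k)" using k nL kL by simp
  then show "x \<in> coset (a \<cdot> n)"
    using nucleus_mult_closed[OF loop_inv_in_nucleus[OF n] k(1)] by (auto simp: mem_coset_iff)
qed

lemma coset_mult_cong:
  assumes a: "a \<in> L" and b: "b \<in> L" and a': "a' \<in> coset a" and b': "b' \<in> coset b"
  shows "coset (a' \<cdot> b') = coset (a \<cdot> b)"
proof -
  obtain n k where n: "n \<in> N" "a' = a \<cdot> n" and k: "k \<in> N" "b' = b \<cdot> k"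
    using a' b' by (auto simp: mem_coset_iff)
  have nL: "n \<in> L" and kL: "k \<in> L" using n k nucleus_subset by auto
  \<comment> \<open>Normality: \<open>n b = b n'\<close> with \<open>n'\<close> nuclear, so \<open>n\<close> can be moved past \<open>b\<close>.\<close>
  let ?n' = "loop_inv b \<cdot> (n \<cdot> b)"
  have n': "?n' \<in> N" using conjugate_in_nucleus[OF b n(1)] .
  have n'L: "?n' \<in> L" using n' nucleus_subset by blast
  have "(a \<cdot> n) \<cdot> (b \<cdot> k) = ((a \<cdot> n) \<cdot> b) \<cdot> k" using nucleus_assoc_right[OF k(1)] a nL b by simp
  also have "\<dots> = (a \<cdot> (n \<cdot> b)) \<cdot> k" using nucleus_assoc_middle[OF n(1)] a b by simp
  also have "\<dots> = (a \<cdot> (b \<cdot> ?n')) \<cdot> k" using b nL by simp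
  also have "\<dots> = ((a \<cdot> b) \<cdot> ?n') \<cdot> k" using nucleus_assoc_right[OF n'] a b by simp
  also have "\<dots> = (a \<cdot> b) \<cdot> (?n' \<cdot> k)" using nucleus_assoc_right[OF k(1)] a b n'L by simp
  finally show ?thesis
    using coset_mult_nucleus[of "a \<cdot> b" "?n' \<cdot> k"] nucleus_mult_closed[OF n' k(1)] a b n k
    by simp
qed

lemma factor_mult_coset:
  assumes a: "a \<in> L" and b: "b \<in> L"
  shows "factor_mult m N (coset a) (coset b) = coset (a \<cdot> b)"
  unfolding factor_mult_def
  using coset_mult_cong[OF a b] someI[of "\<lambda>x. x \<in> coset a"] someI[of "\<lambda>x. x \<in> coset b"]
    mem_coset_self a b by blast

lemma coset_loop_inv: "c \<in> L \<Longrightarrow> coset (loop_inv c) = coset c"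
  using coset_mult_nucleus[of "loop_inv c" "c \<cdot> c"] square_in_nucleus[of c] by simp

lemma coset_mult_commute:
  assumes a: "a \<in> L" and b: "b \<in> L"
  shows "coset (a \<cdot> b) = coset (b \<cdot> a)"
proof -
  have "coset (a \<cdot> b) = coset (loop_inv b \<cdot> loop_inv a)"
    using coset_loop_inv[of "a \<cdot> b"] loop_inv_mult a b by simp
  also have "\<dots> = coset (b \<cdot> a)"
    using coset_mult_cong[of b a "loop_inv b" "loop_inv a"] coset_loop_inv mem_coset_self a b
    by (metis loop_inv_closed)
  finally show ?thesis .
qed

lemma coset_left_cancel:
  assumes a: "a \<in> L" and x: "x \<in> L" and y: "y \<in> L" and eq: "coset (a \<cdot> x) = coset (a \<cdot> y)"
  shows "coset x = coset y"
  using coset_mult_cong[of "loop_inv a" "a \<cdot> x" "loop_inv a" "a \<cdot> y"] mem_coset_self assms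
  by simp

lemma coset_square: "a \<in> L \<Longrightarrow> coset (a \<cdot> a) = coset e"
  using coset_mult_nucleus[of e "a \<cdot> a"] square_in_nucleus by simp

lemma coset_mult_mult_self: "a \<in> L \<Longrightarrow> b \<in> L \<Longrightarrow> coset ((b \<cdot> a) \<cdot> a) = coset b"
  using coset_mult_nucleus[of b "a \<cdot> a"] square_in_nucleus right_alternative by simp

abbreviation factor :: "'a set set" where "factor \<equiv> factor_carrier L m N"

lemma coset_in_factor: "a \<in> L \<Longrightarrow> coset a \<in> factor"
  by (simp add: factor_carrier_def)

lemma factorE:
  assumes "A \<in> factor"
  obtains a where "a \<in> L" "A = coset a"
  using assms by (auto simp: factor_carrier_def)

lemma factor_mult_commute: "A \<in> factor \<Longrightarrow> B \<in> factor \<Longrightarrow> factor_mult m N A B = factor_mult m N B A"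
  by (elim factorE) (simp add: factor_mult_coset coset_mult_commute)

lemma factor_left_div_unique:
  assumes "A \<in> factor" and "B \<in> factor"
  shows "\<exists>!X. X \<in> factor \<and> factor_mult m N A X = B"
proof -
  obtain a where a: "a \<in> L" "A = coset a" using assms(1) by (rule factorE)
  obtain b where b: "b \<in> L" "B = coset b" using assms(2) by (rule factorE)
  show ?thesis
  proof (rule ex1I[of _ "coset (loop_inv a \<cdot> b)"])
    show "coset (loop_inv a \<cdot> b) \<in> factor \<and> factor_mult m N A (coset (loop_inv a \<cdot> b)) = B"
      using a b by (simp add: coset_in_factor factor_mult_coset)
  next
    fix X assume X: "X \<in> factor \<and> factor_mult m N A X = B"
    then obtain x where x: "x \<in> L" "X = coset x" by (auto elim: factorE)
    have "coset (a \<cdot> x) = coset (a \<cdot> (loop_inv a \<cdot> b))" using X x a b by (simp add: factor_mult_coset)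
    then have "coset x = coset (loop_inv a \<cdot> b)"
      by (rule coset_left_cancel[OF a(1) x(1) mult_closed[OF loop_inv_closed[OF a(1)] b(1)]])
    then show "X = coset (loop_inv a \<cdot> b)" using x by simp
  qed
qed

lemma factor_loop: "loop factor (factor_mult m N) (coset e)"
  unfolding loop_def
proof (intro conjI ballI)
  fix A B assume A: "A \<in> factor" and B: "B \<in> factor"
  show "factor_mult m N A B \<in> factor"
    using A B by (elim factorE) (simp add: factor_mult_coset coset_in_factor)
  show "\<exists>!X. X \<in> factor \<and> factor_mult m N A X = B"
    using A B by (rule factor_left_div_unique)
  from factor_left_div_unique[OF A B] obtain X where X: "X \<in> factor" "factor_mult m N A X = B"
    and unique: "\<And>Y. Y \<in> factor \<Longrightarrow> factor_mult m N A Y = B \<Longrightarrow> Y = X"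
    by blast
  show "\<exists>!X. X \<in> factor \<and> factor_mult m N X A = B"
  proof (rule ex1I[of _ X])
    show "X \<in> factor \<and> factor_mult m N X A = B" using X factor_mult_commute[OF X(1) A] by simp
  next
    fix Y assume Y: "Y \<in> factor \<and> factor_mult m N Y A = B"
    then have "factor_mult m N A Y = B" using factor_mult_commute[OF _ A, of Y] by simp
    then show "Y = X" using unique Y by blast
  qed
next
  fix A assume "A \<in> factor"
  then obtain a where "a \<in> L" "A = coset a" by (rule factorE)
  then show "factor_mult m N (coset e) A = A" "factor_mult m N A (coset e) = A"
    by (simp_all add: factor_mult_coset)
qed (simp add: coset_in_factor)

end

theorem proposition2p6:
  fixes L :: "'a set" and m :: "'a \<Rightarrow> 'a \<Rightarrow> 'a" and e :: 'a
  assumes "C_loop L m e"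
  shows "steiner_loop (factor_carrier L m (nucleus L m)) (factor_mult m (nucleus L m))
           (lcoset m e (nucleus L m))"
proof -
  interpret C_loop_ctx L m e using assms by (rule C_loop_ctxI)
  have "factor_mult m N X X = coset e \<and> factor_mult m N (factor_mult m N Y X) X = Y
      \<and> factor_mult m N X Y = factor_mult m N Y X"
    if "X \<in> factor" "Y \<in> factor" for X Y
    using that factor_mult_commute[OF that]
    by (elim factorE) (simp add: factor_mult_coset coset_square coset_mult_mult_self)
  then show ?thesis unfolding steiner_loop_def using factor_loop by blast
qed

end
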